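(* With $T_{2,1}(x)=\sum_{n\ge 2}|\mathcal{S}_{n,1}^{2\prec n}(1324)|x^n$, one has \[ T_{2,1}(x)=\frac12\,x^2\,\frac{d}{dx}\big(x f(x)\big). \]
   Context: $\mathcal{S}_n(1324)$ denotes the set of permutations of $\{1,\dots,n\}$ (in one-line notation) avoiding the pattern $1324$. For $a,k\ge1$, $\mathcal{S}_{n,k}^{a\prec n}(1324)$ is the set of $\sigma\in\mathcal{S}_n(1324)$ with $\sigma^{-1}(n)-\sigma^{-1}(a)=k$ and $\sigma^{-1}(b)>\sigma^{-1}(n)$ for all $b\in\{1,\dots,a-1\}$. Let $a_{n,1}=|\mathcal{S}_{n,1}^{1\prec n}(1324)|$ and $f(x)=\sum_{n\ge2}a_{n,1}x^{n-1}=x+2x^2+6x^3+22x^4+\cdots$ (OEIS A000139). *)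

theory Defs
  imports Main "HOL-Computational_Algebra.Formal_Power_Series"
begin

text \<open>Permutations of {1..n} in one-line notation are lists sigma with
  sigma ! (i-1) = sigma(i). Positions are 0-based; only differences of positions matter.\<close>

definition pos :: "nat list \<Rightarrow> nat \<Rightarrow> nat" where
  "pos \<sigma> v = (THE i. i < length \<sigma> \<and> \<sigma> ! i = v)"

definition avoids1324 :: "nat list \<Rightarrow> bool" where
  "avoids1324 \<sigma> \<longleftrightarrow> \<not> (\<exists>i j k l. i < j \<and> j < k \<and> k < l \<and> l < length \<sigma> \<and>
      \<sigma> ! i < \<sigma> ! k \<and> \<sigma> ! k < \<sigma> ! j \<and> \<sigma> ! j < \<sigma> ! l)"

definition Av1324 :: "nat \<Rightarrow> nat list set" where
  "Av1324 n = {\<sigma>. distinct \<sigma> \<and> set \<sigma> = {1..n} \<and> avoids1324 \<sigma>}"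

definition Sprec :: "nat \<Rightarrow> nat \<Rightarrow> nat \<Rightarrow> nat list set" where
  "Sprec n k a = {\<sigma> \<in> Av1324 n. int (pos \<sigma> n) - int (pos \<sigma> a) = int k \<and>
      (\<forall>b \<in> {1..<a}. pos \<sigma> b > pos \<sigma> n)}"

definition a_n1 :: "nat \<Rightarrow> nat" where
  "a_n1 n = card (Sprec n 1 1)"

definition f_fps :: "rat fps" where
  "f_fps = Abs_fps (\<lambda>m. if m \<ge> 1 then of_nat (a_n1 (m + 1)) else 0)"

definition T21_fps :: "rat fps" where
  "T21_fps = Abs_fps (\<lambda>n. if n \<ge> 2 then of_nat (card (Sprec n 1 2)) else 0)"

end

theory Submission
  imports Defs
begin

(* Deleting the entry 1 from a permutation in S^{2<n+1}_{n+1,1}(1324) and lowering the other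
   entries by one gives a permutation tau in S^{1<n}_{n,1}(1324), the deleted 1 having stood to the
   right of n+1. Conversely, 1 can be put back into any of the n - pos tau n gaps to the right of n
   without creating a 1324: in an occurrence using the new 1, the entry 2, which stands left of the
   maximum and below everything to the right of the gap, could take its place. Reverse-complement
   maps S^{1<n}_{n,1}(1324) onto itself and turns pos tau n into n - pos tau n, so
   2 |S^{2<n+1}_{n+1,1}(1324)| = n a_{n,1}, the coefficientwise form of T_{2,1} = x^2 (x f)' / 2. *)

lemma pos_eqI: "distinct s \<Longrightarrow> i < length s \<Longrightarrow> s ! i = v \<Longrightarrow> pos s v = i"
  unfolding pos_def by (rule the_equality) (auto simp: nth_eq_iff_index_eq)

lemma
  assumes "distinct s" "v \<in> set s"
  shows pos_less_length: "pos s v < length s" and nth_pos: "s ! pos s v = v"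
proof -
  obtain i where "i < length s" "s ! i = v" using assms(2) by (auto simp: in_set_conv_nth)
  then show "pos s v < length s" "s ! pos s v = v" using pos_eqI[OF assms(1)] by auto
qed

lemma length_perm: "distinct s \<Longrightarrow> set s = {1..n} \<Longrightarrow> length s = n"
  using distinct_card by fastforce

lemma distinct_insert_middle: "distinct (A @ x # B) \<longleftrightarrow> distinct (A @ B) \<and> x \<notin> set (A @ B)"
  by auto

lemma mem_Av1324: "\<sigma> \<in> Av1324 n \<longleftrightarrow> distinct \<sigma> \<and> set \<sigma> = {1..n} \<and> avoids1324 \<sigma>"
  by (simp add: Av1324_def)

lemma mem_Sprec:
  "\<sigma> \<in> Sprec n k a \<longleftrightarrow> \<sigma> \<in> Av1324 n \<and> pos \<sigma> n = pos \<sigma> a + k \<and> (\<forall>b\<in>{1..<a}. pos \<sigma> n < pos \<sigma> b)"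
  unfolding Sprec_def by auto

lemma mem_Sprec_1_1: "\<sigma> \<in> Sprec n 1 1 \<longleftrightarrow> \<sigma> \<in> Av1324 n \<and> pos \<sigma> n = Suc (pos \<sigma> 1)"
  by (simp add: mem_Sprec)

lemma mem_Sprec_1_2:
  "\<sigma> \<in> Sprec n 1 2 \<longleftrightarrow> \<sigma> \<in> Av1324 n \<and> pos \<sigma> n = Suc (pos \<sigma> 2) \<and> pos \<sigma> n < pos \<sigma> 1"
proof -
  have "{1..<2::nat} = {1}" by auto
  then show ?thesis by (simp add: mem_Sprec)
qed

lemma
  assumes "\<sigma> \<in> Sprec n k a"
  shows Sprec_distinct: "distinct \<sigma>" and Sprec_set: "set \<sigma> = {1..n}"
    and Sprec_length: "length \<sigma> = n"
  using assms length_perm by (auto simp: Sprec_def Av1324_def)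

lemma finite_Sprec: "finite (Sprec n k a)"
proof (rule finite_subset)
  show "Sprec n k a \<subseteq> {xs. set xs \<subseteq> {1..n} \<and> length xs = n}"
    using length_perm by (auto simp: Sprec_def Av1324_def)
qed (rule finite_lists_length_eq, simp)

lemma avoids1324_embedding:
  assumes "avoids1324 s"
    and "\<And>p. p < length t \<Longrightarrow> g p < length s"
    and "\<And>p q. p < q \<Longrightarrow> q < length t \<Longrightarrow> g p < g q"
    and "\<And>p q. p < length t \<Longrightarrow> q < length t \<Longrightarrow> t ! p < t ! q \<Longrightarrow> s ! g p < s ! g q"
  shows "avoids1324 t"
proof -
  have "\<not> (i < j \<and> j < k \<and> k < l \<and> l < length t \<and> t ! i < t ! k \<and> t ! k < t ! j \<and> t ! j < t ! l)"
    for i j k l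
  proof
    assume h: "i < j \<and> j < k \<and> k < l \<and> l < length t \<and> t ! i < t ! k \<and> t ! k < t ! j \<and> t ! j < t ! l"
    then have "g i < g j \<and> g j < g k \<and> g k < g l \<and> g l < length s \<and>
        s ! g i < s ! g k \<and> s ! g k < s ! g j \<and> s ! g j < s ! g l"
      using assms(2-4) by (meson order.strict_trans)
    then show False using assms(1) unfolding avoids1324_def by blast
  qed
  then show ?thesis unfolding avoids1324_def by blast
qed

lemma avoids1324_map_strict_mono:
  assumes "strict_mono f" shows "avoids1324 (map f s) \<longleftrightarrow> avoids1324 s"
  using avoids1324_embedding[of "map f s" s id] avoids1324_embedding[of s "map f s" id]
  by (auto simp: strict_mono_less[OF assms])

lemma avoids1324_delete:
  assumes "avoids1324 (A @ x # B)" shows "avoids1324 (A @ B)"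
  by (rule avoids1324_embedding[OF assms, where g = "\<lambda>p. if p < length A then p else Suc p"])
    (auto simp: nth_append)

lemma avoids1324_insert_min:
  assumes av: "avoids1324 (A @ B)" and x_min: "\<forall>z\<in>set (A @ B). x < z"
    and y: "y \<in> set A" and y_below_B: "\<forall>z\<in>set B. y < z"
  shows "avoids1324 (A @ x # B)"
  unfolding avoids1324_def
proof (rule notI, elim exE conjE)
  fix i j k l
  let ?s = "A @ x # B" and ?t = "A @ B" and ?a = "length A"
  assume h: "i < j" "j < k" "k < l" "l < length ?s" "?s ! i < ?s ! k" "?s ! k < ?s ! j" "?s ! j < ?s ! l"
  define g where "g p = (if p < ?a then p else p - 1)" for p
  have g: "g p < length ?t \<and> ?s ! p = ?t ! g p" if "p < length ?s" "p \<noteq> ?a" for p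
    using that unfolding g_def by (auto simp: nth_append nth_Cons')
  have g_mono: "p < q \<Longrightarrow> p \<noteq> ?a \<Longrightarrow> q \<noteq> ?a \<Longrightarrow> g p < g q" for p q
    unfolding g_def by auto
  have x_below: "x < ?s ! p" if "p < length ?s" "p \<noteq> ?a" for p
    using g[OF that] x_min nth_mem by metis
  show False
  proof (cases "i = ?a")
    case True
    \<comment> \<open>the inserted minimum plays the role of 1; replace it by the earlier occurrence of y\<close>
    obtain q where q: "q < ?a" "?t ! q = y" using y by (auto simp: in_set_conv_nth nth_append)
    have "?s ! k \<in> set B" using h True by (auto simp: nth_append nth_Cons')
    then have "?t ! q < ?t ! g k" using g[of k] h True q y_below_B by auto
    moreover have jkl: "j \<noteq> ?a" "k \<noteq> ?a" "l \<noteq> ?a" using h True by auto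
    moreover from jkl have "q < g j" "g j < g k" "g k < g l"
      using h True q(1) g_mono unfolding g_def by auto
    moreover from jkl have "g l < length ?t" "?t ! g k < ?t ! g j" "?t ! g j < ?t ! g l"
      using h g[of j] g[of k] g[of l] by auto
    ultimately show False using av unfolding avoids1324_def by blast
  next
    case False
    then have jkl: "j \<noteq> ?a" "k \<noteq> ?a" "l \<noteq> ?a"
      using h x_below[of i] by (auto simp: nth_append)
    then have "g i < g j" "g j < g k" "g k < g l"
      using h False g_mono by auto
    moreover from jkl have "g l < length ?t"
      "?t ! g i < ?t ! g k" "?t ! g k < ?t ! g j" "?t ! g j < ?t ! g l"
      using h False g[of i] g[of j] g[of k] g[of l] by auto
    ultimately show False using av unfolding avoids1324_def by blast
  qed
qed

definition rev_compl :: "nat \<Rightarrow> nat list \<Rightarrow> nat list" where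
  "rev_compl N s = rev (map (\<lambda>x. N - x) s)"

lemma rev_compl_rev_compl: "\<forall>x\<in>set s. x \<le> N \<Longrightarrow> rev_compl N (rev_compl N s) = s"
  by (induction s) (auto simp: rev_compl_def)

lemma avoids1324_rev_compl:
  assumes av: "avoids1324 s" and bound: "\<forall>x\<in>set s. x \<le> N"
  shows "avoids1324 (rev_compl N s)"
  unfolding avoids1324_def
proof (rule notI, elim exE conjE)
  fix i j k l
  let ?r = "rev_compl N s" and ?L = "length s"
  let ?c = "\<lambda>p. ?L - Suc p"
  assume h: "i < j" "j < k" "k < l" "l < length ?r" "?r ! i < ?r ! k" "?r ! k < ?r ! j" "?r ! j < ?r ! l"
  have flip: "?r ! p < ?r ! q \<Longrightarrow> s ! ?c q < s ! ?c p" if "p < ?L" "q < ?L" for p q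
  proof -
    have "?r ! p = N - s ! ?c p" "?r ! q = N - s ! ?c q" "s ! ?c p \<le> N" "s ! ?c q \<le> N"
      using that bound by (auto simp: rev_compl_def rev_nth)
    then show "?r ! p < ?r ! q \<Longrightarrow> s ! ?c q < s ! ?c p" by linarith
  qed
  have "?c l < ?c k" "?c k < ?c j" "?c j < ?c i" "?c i < ?L"
    using h by (auto simp: rev_compl_def)
  moreover have "s ! ?c l < s ! ?c j" "s ! ?c j < s ! ?c k" "s ! ?c k < s ! ?c i"
    using h flip by (auto simp: rev_compl_def)
  ultimately show False using av unfolding avoids1324_def by blast
qed

lemma distinct_rev_compl: "distinct \<sigma> \<Longrightarrow> \<forall>x\<in>set \<sigma>. x \<le> N \<Longrightarrow> distinct (rev_compl N \<sigma>)"
  unfolding rev_compl_def by (auto simp: distinct_map inj_on_def) (metis diff_diff_cancel)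

lemma set_rev_compl:
  assumes "set \<sigma> = {1..n}" shows "set (rev_compl (Suc n) \<sigma>) = {1..n}"
proof -
  have "x \<in> (\<lambda>x. Suc n - x) ` {1..n}" if "x \<in> {1..n}" for x
    using that by (intro rev_image_eqI[of "Suc n - x"]) auto
  then show ?thesis using assms by (auto simp: rev_compl_def)
qed

lemma rev_compl_Av1324: "\<sigma> \<in> Av1324 n \<Longrightarrow> rev_compl (Suc n) \<sigma> \<in> Av1324 n"
  by (simp add: mem_Av1324 distinct_rev_compl set_rev_compl avoids1324_rev_compl)

lemma pos_rev_compl:
  assumes "distinct \<sigma>" "set \<sigma> = {1..n}" "v \<in> {1..n}"
  shows "pos (rev_compl (Suc n) \<sigma>) v = n - Suc (pos \<sigma> (Suc n - v))"
proof (rule pos_eqI)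
  show "distinct (rev_compl (Suc n) \<sigma>)" using assms(1,2) by (simp add: distinct_rev_compl)
  have "length \<sigma> = n" using assms(1,2) length_perm by blast
  moreover have "Suc n - v \<in> set \<sigma>" using assms(2,3) by auto
  ultimately have "pos \<sigma> (Suc n - v) < n" "\<sigma> ! pos \<sigma> (Suc n - v) = Suc n - v"
    using pos_less_length nth_pos assms(1) by metis+
  with \<open>length \<sigma> = n\<close> assms(3) show "n - Suc (pos \<sigma> (Suc n - v)) < length (rev_compl (Suc n) \<sigma>)"
    and "rev_compl (Suc n) \<sigma> ! (n - Suc (pos \<sigma> (Suc n - v))) = v"
    by (auto simp: rev_compl_def rev_nth)
qed

lemma nth_insert_prefix:
  assumes "A @ B = map Suc \<tau>" "p < length A"
  shows "p < length \<tau>" "(A @ x # B) ! p = Suc (\<tau> ! p)"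
proof -
  have "length \<tau> = length A + length B" using arg_cong[OF assms(1), of length] by simp
  then show "p < length \<tau>" using assms(2) by simp
  moreover have "(A @ x # B) ! p = (A @ B) ! p" using assms(2) by (simp add: nth_append)
  ultimately show "(A @ x # B) ! p = Suc (\<tau> ! p)" by (simp only: assms(1) nth_map)
qed

lemma remove_one_Sprec:
  assumes m: "m \<ge> 2" and \<sigma>: "A @ 1 # B \<in> Sprec (Suc m) 1 2" and \<tau>: "A @ B = map Suc \<tau>"
  shows "\<tau> \<in> Sprec m 1 1 \<and> pos \<tau> m < length A"
proof -
  let ?s = "A @ 1 # B"
  from \<sigma> have ds: "distinct ?s" and ss: "set ?s = {1..Suc m}" and as: "avoids1324 ?s"
    and adj: "pos ?s (Suc m) = Suc (pos ?s 2)" and before1: "pos ?s (Suc m) < pos ?s 1"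
    unfolding mem_Sprec_1_2 mem_Av1324 by blast+
  have "distinct (A @ B)" using ds by simp
  then have dt: "distinct \<tau>" using \<tau> by (simp add: distinct_map)
  have "Suc ` set \<tau> = Suc ` {1..m}"
  proof -
    have "set (A @ B) = {1..Suc m} - {1}" using ss ds by auto
    then show ?thesis using \<tau> by (auto simp: image_Suc_atLeastAtMost)
  qed
  then have st: "set \<tau> = {1..m}" by (simp only: inj_image_eq_iff[OF inj_Suc])
  have at: "avoids1324 \<tau>"
    using avoids1324_delete[OF as] avoids1324_map_strict_mono[of Suc] \<tau> by (simp add: strict_mono_Suc_iff)
  have pos1: "pos ?s 1 = length A" by (rule pos_eqI[OF ds]) auto
  have pos_\<tau>: "pos \<tau> v = pos ?s (Suc v)" if "pos ?s (Suc v) < length A" "Suc v \<in> set ?s" for v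
    using nth_insert_prefix[OF \<tau> that(1)] nth_pos[OF ds that(2)] by (intro pos_eqI[OF dt]) auto
  have "pos \<tau> m = pos ?s (Suc m)"
    using before1 pos1 ss by (intro pos_\<tau>) auto
  moreover have "2 \<in> set ?s" using ss m by simp
  then have "pos \<tau> 1 = pos ?s 2"
    using pos_\<tau>[of 1] adj before1 pos1 by (simp add: numeral_2_eq_2)
  ultimately have "pos \<tau> m = Suc (pos \<tau> 1)" "pos \<tau> m < length A"
    using adj before1 pos1 by simp_all
  then show ?thesis unfolding mem_Sprec_1_1 mem_Av1324 using dt st at by blast
qed

lemma insert_one_Sprec:
  assumes m: "m \<ge> 2" and \<tau>_mem: "\<tau> \<in> Sprec m 1 1" and \<tau>: "A @ B = map Suc \<tau>"
    and before_gap: "pos \<tau> m < length A"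
  shows "A @ 1 # B \<in> Sprec (Suc m) 1 2"
proof -
  let ?s = "A @ 1 # B"
  from \<tau>_mem have dt: "distinct \<tau>" and st: "set \<tau> = {1..m}" and at: "avoids1324 \<tau>"
    and adj: "pos \<tau> m = Suc (pos \<tau> 1)"
    unfolding mem_Sprec_1_1 mem_Av1324 by blast+
  have sAB: "set (A @ B) = {2..Suc m}" using \<tau> st by (simp add: image_Suc_atLeastAtMost)
  have dAB: "distinct (A @ B)" using \<tau> dt by (simp add: distinct_map)
  have "1 \<notin> set (A @ B)" unfolding sAB by simp
  then have ds: "distinct ?s" using dAB by simp
  have "set ?s = insert 1 (set (A @ B))" by auto
  also have "\<dots> = {1..Suc m}" unfolding sAB by (simp add: atLeastAtMost_insertL numeral_2_eq_2)
  finally have ss: "set ?s = {1..Suc m}" .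
  have pos_s: "pos ?s (Suc v) = pos \<tau> v" if "v \<in> set \<tau>" "pos \<tau> v < length A" for v
    using nth_insert_prefix[OF \<tau> that(2)] nth_pos[OF dt that(1)] that(2)
    by (intro pos_eqI[OF ds]) auto
  have one_in: "1 \<in> set \<tau>" and m_in: "m \<in> set \<tau>" using st m by auto
  have before_gap_1: "pos \<tau> 1 < length A" using adj before_gap by simp
  have "A ! pos \<tau> 1 = Suc 1"
    using nth_insert_prefix[OF \<tau> before_gap_1] nth_pos[OF dt one_in] before_gap_1
    by (simp add: nth_append)
  then have two_in_A: "2 \<in> set A" using before_gap_1 by (metis nth_mem Suc_1)
  have two_below_B: "\<forall>z\<in>set B. 2 < z"
  proof
    fix z assume z: "z \<in> set B"
    then have "z \<in> set (A @ B)" by simp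
    then have "z \<in> {2..Suc m}" unfolding sAB .
    moreover have "z \<noteq> 2" using dAB two_in_A z by auto
    ultimately show "2 < z" by simp
  qed
  have "avoids1324 (A @ B)"
    using at \<tau> avoids1324_map_strict_mono[of Suc] by (simp add: strict_mono_Suc_iff)
  then have as: "avoids1324 ?s"
    by (rule avoids1324_insert_min[OF _ _ two_in_A two_below_B]) (unfold sAB, simp)
  have "pos ?s 1 = length A" by (rule pos_eqI[OF ds]) auto
  moreover have "pos ?s (Suc m) = pos \<tau> m" using pos_s m_in before_gap by blast
  moreover have "pos ?s 2 = pos \<tau> 1" using pos_s[OF one_in before_gap_1] by (simp add: numeral_2_eq_2)
  ultimately have "pos ?s (Suc m) = Suc (pos ?s 2)" "pos ?s (Suc m) < pos ?s 1"
    using adj before_gap by simp_all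
  then show ?thesis unfolding mem_Sprec_1_2 mem_Av1324 using ds ss as by blast
qed

definition insert_one :: "nat list \<times> nat \<Rightarrow> nat list" where
  "insert_one = (\<lambda>(\<tau>, j). take j (map Suc \<tau>) @ 1 # drop j (map Suc \<tau>))"

definition remove_one :: "nat list \<Rightarrow> nat list \<times> nat" where
  "remove_one \<sigma> = (map (\<lambda>x. x - 1) (remove1 1 \<sigma>), pos \<sigma> 1)"

lemma remove_one_split:
  assumes "distinct (A @ 1 # B)" "0 \<notin> set (A @ B)"
  shows "remove_one (A @ 1 # B) = (map (\<lambda>x. x - 1) (A @ B), length A)"
    and "map Suc (map (\<lambda>x. x - 1) (A @ B)) = A @ B"
proof -
  have "pos (A @ 1 # B) 1 = length A" by (rule pos_eqI[OF assms(1)]) auto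
  then show "remove_one (A @ 1 # B) = (map (\<lambda>x. x - 1) (A @ B), length A)"
    using assms(1) by (simp add: remove_one_def remove1_append)
  have "map Suc (map (\<lambda>x. x - 1) xs) = xs" if "0 \<notin> set xs" for xs
    using that by (induction xs) auto
  then show "map Suc (map (\<lambda>x. x - 1) (A @ B)) = A @ B" using assms(2) by blast
qed

lemma remove_one_insert_one:
  assumes "distinct \<tau>" "0 \<notin> set \<tau>" "j \<le> length \<tau>"
  shows "remove_one (insert_one (\<tau>, j)) = (\<tau>, j)"
proof -
  let ?A = "take j (map Suc \<tau>)" and ?B = "drop j (map Suc \<tau>)"
  have "distinct (?A @ 1 # ?B)" "0 \<notin> set (?A @ ?B)"
    unfolding distinct_insert_middle append_take_drop_id using assms(1,2) by (auto simp: distinct_map)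
  then show ?thesis
    using remove_one_split(1)[of ?A ?B] assms(3) by (simp add: insert_one_def comp_def)
qed

lemma insert_one_remove_one:
  assumes "distinct \<sigma>" "1 \<in> set \<sigma>" "0 \<notin> set \<sigma>"
  shows "insert_one (remove_one \<sigma>) = \<sigma>"
proof -
  obtain A B where \<sigma>: "\<sigma> = A @ 1 # B" using split_list[OF assms(2)] by blast
  then have "insert_one (remove_one \<sigma>) = take (length A) (A @ B) @ 1 # drop (length A) (A @ B)"
    using remove_one_split[of A B] assms by (simp add: insert_one_def)
  then show ?thesis using \<sigma> by simp
qed

lemma insert_one_in_Sprec:
  assumes "m \<ge> 2" "\<tau> \<in> Sprec m 1 1" "pos \<tau> m < j" "j \<le> m"
  shows "insert_one (\<tau>, j) \<in> Sprec (Suc m) 1 2"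
proof -
  have "length \<tau> = m" using assms(2) by (rule Sprec_length)
  then have "take j (map Suc \<tau>) @ 1 # drop j (map Suc \<tau>) \<in> Sprec (Suc m) 1 2"
    using assms by (intro insert_one_Sprec) simp_all
  then show ?thesis by (simp add: insert_one_def)
qed

lemma remove_one_in_Sigma:
  assumes "m \<ge> 2" "\<sigma> \<in> Sprec (Suc m) 1 2"
  shows "remove_one \<sigma> \<in> (SIGMA \<tau>:Sprec m 1 1. {pos \<tau> m<..m})"
proof -
  have set: "set \<sigma> = {1..Suc m}" using assms(2) by (rule Sprec_set)
  then obtain A B where \<sigma>: "\<sigma> = A @ 1 # B" using split_list[of 1 \<sigma>] by auto
  have "0 \<notin> set \<sigma>" by (simp add: set)
  then have "0 \<notin> set (A @ B)" using \<sigma> by simp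
  note split = remove_one_split[OF Sprec_distinct[OF assms(2)[unfolded \<sigma>]] this]
  have "map (\<lambda>x. x - 1) (A @ B) \<in> Sprec m 1 1 \<and> pos (map (\<lambda>x. x - 1) (A @ B)) m < length A"
    using remove_one_Sprec[OF assms(1) _ split(2)[symmetric]] assms(2) \<sigma> by blast
  moreover have "length A \<le> m" using Sprec_length[OF assms(2)] \<sigma> by simp
  ultimately show ?thesis using split(1) \<sigma> by auto
qed

lemma bij_betw_insert_one:
  assumes "m \<ge> 2"
  shows "bij_betw insert_one (SIGMA \<tau>:Sprec m 1 1. {pos \<tau> m<..m}) (Sprec (Suc m) 1 2)"
proof (rule bij_betw_byWitness[where f' = remove_one])
  show "\<forall>x\<in>(SIGMA \<tau>:Sprec m 1 1. {pos \<tau> m<..m}). remove_one (insert_one x) = x"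
  proof
    fix x assume "x \<in> (SIGMA \<tau>:Sprec m 1 1. {pos \<tau> m<..m})"
    then obtain \<tau> j where x: "x = (\<tau>, j)" and \<tau>: "\<tau> \<in> Sprec m 1 1" and "j \<le> m" by auto
    then show "remove_one (insert_one x) = x"
      using Sprec_distinct[OF \<tau>] Sprec_set[OF \<tau>] Sprec_length[OF \<tau>] by (simp add: remove_one_insert_one)
  qed
  show "\<forall>\<sigma>\<in>Sprec (Suc m) 1 2. insert_one (remove_one \<sigma>) = \<sigma>"
  proof
    fix \<sigma> assume "\<sigma> \<in> Sprec (Suc m) 1 2"
    then show "insert_one (remove_one \<sigma>) = \<sigma>"
      using Sprec_distinct Sprec_set by (simp add: insert_one_remove_one)
  qed
  show "insert_one ` (SIGMA \<tau>:Sprec m 1 1. {pos \<tau> m<..m}) \<subseteq> Sprec (Suc m) 1 2"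
    using insert_one_in_Sprec[OF assms] by auto
  show "remove_one ` Sprec (Suc m) 1 2 \<subseteq> (SIGMA \<tau>:Sprec m 1 1. {pos \<tau> m<..m})"
    using remove_one_in_Sigma[OF assms] by blast
qed

lemma card_Sprec_Suc_1_2_sum:
  assumes "m \<ge> 2"
  shows "card (Sprec (Suc m) 1 2) = (\<Sum>\<tau>\<in>Sprec m 1 1. m - pos \<tau> m)"
proof -
  have "card (Sprec (Suc m) 1 2) = card (SIGMA \<tau>:Sprec m 1 1. {pos \<tau> m<..m})"
    using bij_betw_same_card[OF bij_betw_insert_one[OF assms]] by simp
  also have "\<dots> = (\<Sum>\<tau>\<in>Sprec m 1 1. m - pos \<tau> m)" by (simp add: finite_Sprec)
  finally show ?thesis .
qed

lemma rev_compl_Sprec_1_1: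
  assumes "m \<ge> 1" "\<tau> \<in> Sprec m 1 1"
  shows "rev_compl (Suc m) \<tau> \<in> Sprec m 1 1" and "pos (rev_compl (Suc m) \<tau>) m = m - pos \<tau> m"
proof -
  from assms(2) have av: "\<tau> \<in> Av1324 m" and adj: "pos \<tau> m = Suc (pos \<tau> 1)"
    unfolding mem_Sprec_1_1 by blast+
  have d: "distinct \<tau>" and s: "set \<tau> = {1..m}" using av by (simp_all add: mem_Av1324)
  have "pos \<tau> m < m" using pos_less_length[OF d] s assms(1) length_perm[OF d s] by auto
  moreover have "pos (rev_compl (Suc m) \<tau>) m = m - pos \<tau> m"
    using pos_rev_compl[OF d s, of m] adj assms(1) by simp
  moreover have "pos (rev_compl (Suc m) \<tau>) 1 = m - Suc (pos \<tau> m)"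
    using pos_rev_compl[OF d s, of 1] assms(1) by simp
  ultimately show "pos (rev_compl (Suc m) \<tau>) m = m - pos \<tau> m"
    and "rev_compl (Suc m) \<tau> \<in> Sprec m 1 1"
    using rev_compl_Av1324[OF av] unfolding mem_Sprec_1_1 by auto
qed

lemma sum_Sprec_1_1_pos_symmetric:
  assumes "m \<ge> 1"
  shows "(\<Sum>\<tau>\<in>Sprec m 1 1. m - pos \<tau> m) = (\<Sum>\<tau>\<in>Sprec m 1 1. pos \<tau> m)"
proof -
  have involution: "rev_compl (Suc m) (rev_compl (Suc m) \<tau>) = \<tau>" if "\<tau> \<in> Sprec m 1 1" for \<tau>
    using Sprec_set[OF that] by (intro rev_compl_rev_compl) auto
  have maps: "rev_compl (Suc m) ` Sprec m 1 1 \<subseteq> Sprec m 1 1"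
    using rev_compl_Sprec_1_1(1)[OF assms] by blast
  have "bij_betw (rev_compl (Suc m)) (Sprec m 1 1) (Sprec m 1 1)"
    using involution by (intro bij_betw_byWitness[OF _ _ maps maps]) blast+
  then have "(\<Sum>\<tau>\<in>Sprec m 1 1. pos \<tau> m) = (\<Sum>\<tau>\<in>Sprec m 1 1. pos (rev_compl (Suc m) \<tau>) m)"
    by (rule sum.reindex_bij_betw[symmetric])
  also have "\<dots> = (\<Sum>\<tau>\<in>Sprec m 1 1. m - pos \<tau> m)"
    using rev_compl_Sprec_1_1(2)[OF assms] by simp
  finally show ?thesis ..
qed

lemma double_card_Sprec_Suc_1_2:
  assumes "m \<ge> 2"
  shows "2 * card (Sprec (Suc m) 1 2) = m * card (Sprec m 1 1)"
proof -
  have "pos \<tau> m \<le> m" if "\<tau> \<in> Sprec m 1 1" for \<tau>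
    using pos_less_length[OF Sprec_distinct[OF that]] Sprec_set[OF that] Sprec_length[OF that] assms
    by fastforce
  then have "(\<Sum>\<tau>\<in>Sprec m 1 1. m - pos \<tau> m) + (\<Sum>\<tau>\<in>Sprec m 1 1. pos \<tau> m) = (\<Sum>\<tau>\<in>Sprec m 1 1. m)"
    by (simp add: sum.distrib[symmetric])
  then show ?thesis
    using card_Sprec_Suc_1_2_sum[OF assms] sum_Sprec_1_1_pos_symmetric[of m] assms by (simp add: mult_2 ac_simps)
qed

unbundle fps_syntax

lemma fps_deriv_X_mult_nth: "fps_deriv (fps_X * F) $ n = of_nat (Suc n) * F $ n"
  by (simp only: fps_deriv_nth fps_X_mult_nth) simp

lemma fps_nth_half_X2_deriv_X_mult:
  fixes F :: "'a :: field fps"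
  shows "(fps_const (1/2) * fps_X ^ 2 * fps_deriv (fps_X * F)) $ n =
    (if n < 2 then 0 else of_nat (n - 1) * F $ (n - 2) / 2)"
  by (simp only: mult.assoc fps_mult_left_const_nth fps_X_power_mult_nth fps_deriv_X_mult_nth)
    (simp add: Suc_diff_Suc numeral_2_eq_2)

lemma Sprec_2_1_2: "Sprec 2 1 2 = {}"
  unfolding Sprec_def by auto

theorem mainTheorem7:
  shows "T21_fps = fps_const (1/2) * fps_X ^ 2 * fps_deriv (fps_X * f_fps)"
proof (rule fps_ext)
  fix n
  show "T21_fps $ n = (fps_const (1/2) * fps_X ^ 2 * fps_deriv (fps_X * f_fps)) $ n"
  proof (cases "n \<ge> 3")
    case True
    then obtain m where n: "n = Suc m" and m: "m \<ge> 2" by (cases n) auto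
    have "2 * of_nat (card (Sprec (Suc m) 1 2)) = (of_nat m * of_nat (a_n1 m) :: rat)"
      using double_card_Sprec_Suc_1_2[OF m] unfolding a_n1_def by (metis of_nat_mult of_nat_numeral)
    moreover have "f_fps $ (n - 2) = of_nat (a_n1 m)" using n m by (simp add: f_fps_def)
    ultimately show ?thesis
      unfolding fps_nth_half_X2_deriv_X_mult T21_fps_def using n m by simp
  next
    case False
    then have "n < 2 \<or> n = 2" by auto
    then show ?thesis
      unfolding fps_nth_half_X2_deriv_X_mult T21_fps_def using Sprec_2_1_2 by (auto simp: f_fps_def)
  qed
qed

end
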